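(* Let $\ell\ge 1$ and $w\ge 0$ be integers, and let $A=\langle A_1,\dots,A_\ell\rangle$ and $B=\langle B_1,\dots,B_\ell\rangle$ be real sequences. Let $i,j\in\{1,\dots,\ell\}$ with $i-w\le j\le i+w$, so that $(i,j)$ is an alignment permitted by the window $w$. If $B_j<\mathbb{L}^{\Omega}_j$, then either $A_i>\mathbb{U}^B_i\ge B_j$ or $\mathbb{U}^B_i\ge A_i\ge B_j\ge \mathbb{L}^B_i$.
   Context: For a real sequence $S=\langle S_1,\dots,S_\ell\rangle$ and window $w$, the upper and lower envelopes are the sequences $\mathbb{U}^S_i=\max_{\max(1,i-w)\le j\le \min(\ell,i+w)} S_j$ and $\mathbb{L}^S_i=\min_{\max(1,i-w)\le j\le \min(\ell,i+w)} S_j$ for $1\le i\le\ell$. The projection $\Omega=\Omega_w(A,B)$ of $A$ onto $B$ is the sequence with $\Omega_i=\mathbb{U}^B_i$ if $A_i>\mathbb{U}^B_i$, $\Omega_i=\mathbb{L}^B_i$ if $A_i<\mathbb{L}^B_i$, and $\Omega_i=A_i$ otherwise. $\mathbb{U}^{\Omega}$ and $\mathbb{L}^{\Omega}$ denote the upper and lower envelopes (with the same window $w$) of $\Omega$. *)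

theory Defs
  imports Complex_Main
begin

text \<open>Sequences S = S_1..S_l are modelled as functions nat => real, only the
values at indices 1..l are relevant.\<close>

definition win :: "nat \<Rightarrow> nat \<Rightarrow> nat \<Rightarrow> nat set" where
  "win l w i = {j. max 1 (int i - int w) \<le> int j \<and> int j \<le> min (int l) (int i + int w)}"

definition upper_env :: "nat \<Rightarrow> nat \<Rightarrow> (nat \<Rightarrow> real) \<Rightarrow> nat \<Rightarrow> real" where
  "upper_env l w S i = Max (S ` win l w i)"

definition lower_env :: "nat \<Rightarrow> nat \<Rightarrow> (nat \<Rightarrow> real) \<Rightarrow> nat \<Rightarrow> real" where
  "lower_env l w S i = Min (S ` win l w i)"

definition projection :: "nat \<Rightarrow> nat \<Rightarrow> (nat \<Rightarrow> real) \<Rightarrow> (nat \<Rightarrow> real) \<Rightarrow> nat \<Rightarrow> real" where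
  "projection l w A B i =
     (if A i > upper_env l w B i then upper_env l w B i
      else if A i < lower_env l w B i then lower_env l w B i
      else A i)"

end

theory Submission
  imports Defs
begin

text \<open>Since i and j lie in each other's windows, B j < lower_env (projection) j \<le> projection i
  and lower_env B i \<le> B j. So the projection at i exceeds the lower envelope of B at i, hence
  A i was not clamped from below: the projection at i is either upper_env B i or A i itself.\<close>

lemma mem_win_iff:
  "j \<in> win l w i \<longleftrightarrow> 1 \<le> j \<and> j \<le> l \<and> int i - int w \<le> int j \<and> int j \<le> int i + int w"
  unfolding win_def by auto

lemma finite_win: "finite (win l w i)"
  by (rule finite_subset[of _ "{..l}"]) (auto simp: mem_win_iff)

lemma lower_env_le: "j \<in> win l w i \<Longrightarrow> lower_env l w S i \<le> S j"
  unfolding lower_env_def by (simp add: finite_win)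

lemma projection_gt_cases:
  assumes "lower_env l w B i \<le> x" and "x < projection l w A B i"
  shows "(upper_env l w B i < A i \<and> x < upper_env l w B i)
       \<or> (A i \<le> upper_env l w B i \<and> x < A i)"
  using assms unfolding projection_def by (auto split: if_splits)

theorem mainTheorem2:
  fixes l w i j :: nat and A B :: "nat \<Rightarrow> real"
  assumes "l \<ge> 1"
    and "i \<in> {1..l}" and "j \<in> {1..l}"
    and "int i - int w \<le> int j" and "int j \<le> int i + int w"
    and "B j < lower_env l w (projection l w A B) j"
  shows "(A i > upper_env l w B i \<and> upper_env l w B i \<ge> B j)
       \<or> (upper_env l w B i \<ge> A i \<and> A i \<ge> B j \<and> B j \<ge> lower_env l w B i)"
proof -
  have i_win_j: "i \<in> win l w j" and j_win_i: "j \<in> win l w i"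
    using assms(2-5) by (auto simp: mem_win_iff)
  have "B j < projection l w A B i"
    using assms(6) lower_env_le[OF i_win_j, of "projection l w A B"] by linarith
  moreover have "lower_env l w B i \<le> B j"
    using lower_env_le[OF j_win_i] .
  ultimately show ?thesis
    using projection_gt_cases[of l w B i "B j" A] by auto
qed

end
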